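(* Let $q$ be a power of an odd prime $p$ with $q\equiv1\pmod 4$, let $k$ be a divisor of $q-1$ with $k<p$, and set $e=(q-1)/k$. Let $B$ be the subgroup of order $k$ of $\mathbb{F}_q^\times$. (i) If $e$ is odd, then $(q,k)$ gives a $3$-$(q+1,k,\lambda)$ design with $\lambda=\tfrac12(k-1)(k-2)$, i.e. the $\mathrm{PSL}(2,q)$-orbit of $B$ is the block set of a $3$-$(q+1,k,\tfrac12(k-1)(k-2))$ design. (ii) If $e$ is even and $(q,k)$ gives a $3$-$(q+1,k,\lambda)$ design, then $\lambda=\tfrac14(k-1)(k-2)$.
   Context: The group $\mathrm{PSL}(2,q)$ acts on $\mathrm{PG}(1,q)=\mathbb{F}_q\cup\{\infty\}$ by linear fractional transformations $z\mapsto (az+b)/(cz+d)$ with $ad-bc$ a nonzero square in $\mathbb{F}_q$ (matrices modulo $\pm I$). A $k$-subset $B$ of $\mathrm{PG}(1,q)$ is a starter of a $3$-design if its orbit $\{gB: g\in\mathrm{PSL}(2,q)\}$ is the block set of a $3$-$(q+1,k,\lambda)$ design (every $3$-subset of the $q+1$ points lies in exactly $\lambda$ blocks) for some positive integer $\lambda$. For $q\equiv 1\pmod 4$ and $k\mid q-1$, "$(q,k)$ gives a $3$-design" means the unique subgroup of order $k$ of $\mathbb{F}_q^\times$ is such a starter. *)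

theory Defs
  imports Main "HOL-Computational_Algebra.Primes"
begin

text \<open>The projective line PG(1,q) over a finite field 'a is modelled as 'a option:
  Some x is the affine point x, None is the point at infinity.\<close>

definition lft :: "'a::field \<Rightarrow> 'a \<Rightarrow> 'a \<Rightarrow> 'a \<Rightarrow> 'a option \<Rightarrow> 'a option" where
  "lft a b c d z = (case z of
      None \<Rightarrow> (if c = 0 then None else Some (a / c))
    | Some x \<Rightarrow> (if c * x + d = 0 then None else Some ((a * x + b) / (c * x + d))))"

definition psl2 :: "('a::field option \<Rightarrow> 'a option) set" where
  "psl2 = {lft a b c d | a b c d. \<exists>s. s \<noteq> 0 \<and> a * d - b * c = s ^ 2}"

definition psl2_orbit :: "'a::field option set \<Rightarrow> 'a option set set" where
  "psl2_orbit B = {g ` B | g. g \<in> psl2}"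

definition is_3_design :: "'p set \<Rightarrow> 'p set set \<Rightarrow> nat \<Rightarrow> nat \<Rightarrow> nat \<Rightarrow> bool" where
  "is_3_design V Bs v k lam \<longleftrightarrow> finite V \<and> card V = v \<and> lam > 0 \<and>
     (\<forall>X\<in>Bs. X \<subseteq> V \<and> card X = k) \<and>
     (\<forall>T. T \<subseteq> V \<longrightarrow> card T = 3 \<longrightarrow> card {X\<in>Bs. T \<subseteq> X} = lam)"

definition gives_3_design :: "'a::{field,finite} set \<Rightarrow> nat \<Rightarrow> nat \<Rightarrow> bool" where
  "gives_3_design B k lam \<longleftrightarrow>
     is_3_design (UNIV :: 'a option set) (psl2_orbit (Some ` B)) (card (UNIV :: 'a set) + 1) k lam"


end

theory Submission
  imports Defs "HOL-Computational_Algebra.Polynomial" "HOL-Library.Cardinality"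
    "HOL-Number_Theory.Residues"
begin

text \<open>
  Fix a nonsquare \<open>v\<close>. A block through \<open>\<infinity>\<close>, \<open>0\<close>, \<open>r\<close> is the image of \<open>B\<close> under a linear
  fractional map sending distinct \<open>x, y, z \<in> B\<close> to \<open>\<infinity>, 0, r\<close>; this map is unique and lies in
  PSL(2,q) exactly when \<open>r (z - x) (z - y) (y - x)\<close> is a nonzero square, and we then call
  \<open>(x, y, z)\<close> admissible for \<open>r\<close>. Two admissible triples give the same block iff they differ by
  an element of the stabiliser of \<open>B\<close> in PSL(2,q). Since \<open>k < p\<close>, comparing two coefficients of
  \<open>(a w + b)\<^sup>k = (c w + d)\<^sup>k\<close> on the \<open>k\<close>-th roots of unity shows that a linear fractional map
  preserving \<open>B\<close> has a diagonal or antidiagonal matrix, so the stabiliser consists of the maps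
  \<open>w \<mapsto> t w\<close> and \<open>w \<mapsto> t / w\<close> with \<open>t \<in> B\<close> a square. Hence the number of blocks through
  \<open>\<infinity>, 0, r\<close> times the order of the stabiliser is the number of triples admissible for \<open>r\<close>, and
  every triple of distinct elements of \<open>B\<close> is admissible for exactly one of \<open>r = 1\<close> and \<open>r = v\<close>.

  If \<open>e\<close> is even, all of \<open>B\<close> are squares, the stabiliser has order \<open>2k\<close>, and adding the two
  counts gives \<open>4 \<lambda> k = k (k - 1) (k - 2)\<close>. If \<open>e\<close> is odd, half of \<open>B\<close> are squares, the
  stabiliser has order \<open>k\<close>, and multiplication by a nonsquare of \<open>B\<close> exchanges the triples
  admissible for \<open>1\<close> and for \<open>v\<close>; so both \<open>{\<infinity>, 0, 1}\<close> and \<open>{\<infinity>, 0, v}\<close> lie in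
  \<open>(k - 1) (k - 2) / 2\<close> blocks, and PSL(2,q) moves every 3-subset to one of them.
\<close>

section \<open>Linear fractional maps and PSL(2,q)\<close>

lemma lft_None [simp]: "lft a b c d None = (if c = 0 then None else Some (a / c))"
  by (simp add: lft_def)

lemma lft_Some [simp]:
  "lft a b c d (Some x) = (if c * x + d = 0 then None else Some ((a * x + b) / (c * x + d)))"
  by (simp add: lft_def)

lemma lft_Some_divide:
  fixes u w :: "'a::field"
  assumes "w \<noteq> 0"
  shows "lft a b c d (Some (u / w)) =
    (if c * u + d * w = 0 then None else Some ((a * u + b * w) / (c * u + d * w)))"
proof -
  have "c * (u / w) + d = (c * u + d * w) / w" "a * (u / w) + b = (a * u + b * w) / w"
    using assms by (simp_all add: field_simps)
  then show ?thesis using assms by simp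
qed

lemma lft_comp:
  fixes a b c d a' b' c' d' :: "'a::field"
  assumes "a * d - b * c \<noteq> 0" "a' * d' - b' * c' \<noteq> 0"
  shows "lft a b c d (lft a' b' c' d' z) =
    lft (a * a' + b * c') (a * b' + b * d') (c * a' + d * c') (c * b' + d * d') z"
proof (cases z)
  case None
  then show ?thesis
    using assms lft_Some_divide[of c' a b c d a'] by (auto simp: algebra_simps)
next
  case (Some x)
  have num: "(a * a' + b * c') * x + (a * b' + b * d') = a * (a' * x + b') + b * (c' * x + d')"
    and den: "(c * a' + d * c') * x + (c * b' + d * d') = c * (a' * x + b') + d * (c' * x + d')"
    by (simp_all add: algebra_simps)
  show ?thesis
  proof (cases "c' * x + d' = 0")
    case True
    have "a' * x + b' \<noteq> 0"
    proof
      assume "a' * x + b' = 0"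
      with True have "d' = - (c' * x)" "b' = - (a' * x)"
        by (simp_all add: eq_neg_iff_add_eq_0 add.commute)
      then have "a' * d' - b' * c' = 0" by (simp add: algebra_simps)
      with assms(2) show False ..
    qed
    with Some True show ?thesis by (simp add: num den)
  next
    case False
    with Some show ?thesis
      using lft_Some_divide[OF False, of a b c d "a' * x + b'"] by (simp add: num den)
  qed
qed

lemma lft_scale:
  fixes m :: "'a::field"
  assumes "m \<noteq> 0"
  shows "lft (m * a) (m * b) (m * c) (m * d) = lft a b c d"
proof
  fix z
  show "lft (m * a) (m * b) (m * c) (m * d) z = lft a b c d z"
    using assms by (cases z) (simp_all add: mult.assoc flip: distrib_left)
qed

lemma lft_inverse:
  fixes a b c d :: "'a::field"
  assumes "a * d - b * c \<noteq> 0"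
  shows "lft d (- b) (- c) a (lft a b c d z) = z"
proof -
  have "d * a - (- b) * (- c) \<noteq> 0" using assms by (simp add: algebra_simps)
  from lft_comp[OF this assms] have
    "lft d (- b) (- c) a (lft a b c d z) = lft (a * d - b * c) 0 0 (a * d - b * c) z"
    by (simp add: algebra_simps)
  also have "\<dots> = z" using assms by (cases z) simp_all
  finally show ?thesis .
qed

lemma det_mult_2x2:
  fixes a b c d a' b' c' d' :: "'a::comm_ring"
  shows "(a * a' + b * c') * (c * b' + d * d') - (a * b' + b * d') * (c * a' + d * c') =
    (a * d - b * c) * (a' * d' - b' * c')"
  by (simp add: algebra_simps)

definition nonzero_square :: "'a::field \<Rightarrow> bool" where
  "nonzero_square x \<longleftrightarrow> (\<exists>s. s \<noteq> 0 \<and> x = s ^ 2)"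

lemma nonzero_square_nonzero: "nonzero_square x \<Longrightarrow> x \<noteq> 0"
  unfolding nonzero_square_def by auto

lemma nonzero_square_power2: "x \<noteq> 0 \<Longrightarrow> nonzero_square (x ^ 2)"
  unfolding nonzero_square_def by auto

lemma nonzero_square_mult: "nonzero_square x \<Longrightarrow> nonzero_square y \<Longrightarrow> nonzero_square (x * y)"
  unfolding nonzero_square_def by (metis mult_eq_0_iff power_mult_distrib)

lemma nonzero_square_inverse: "nonzero_square x \<Longrightarrow> nonzero_square (inverse x)"
  unfolding nonzero_square_def by (metis inverse_nonzero_iff_nonzero power_inverse)

lemma nonzero_square_divide: "nonzero_square x \<Longrightarrow> nonzero_square y \<Longrightarrow> nonzero_square (x / y)"
  by (simp add: divide_inverse nonzero_square_mult nonzero_square_inverse)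

lemma psl2_iff: "g \<in> psl2 \<longleftrightarrow> (\<exists>a b c d. g = lft a b c d \<and> nonzero_square (a * d - b * c))"
  unfolding psl2_def nonzero_square_def by auto

lemma psl2_comp:
  assumes "g \<in> psl2" "h \<in> psl2"
  shows "g \<circ> h \<in> psl2"
proof -
  obtain a b c d where g: "g = lft a b c d" "nonzero_square (a * d - b * c)"
    using assms(1) psl2_iff by blast
  obtain a' b' c' d' where h: "h = lft a' b' c' d'" "nonzero_square (a' * d' - b' * c')"
    using assms(2) psl2_iff by blast
  have "g \<circ> h = lft (a * a' + b * c') (a * b' + b * d') (c * a' + d * c') (c * b' + d * d')"
    using lft_comp g h nonzero_square_nonzero by fastforce
  moreover have "nonzero_square
      ((a * a' + b * c') * (c * b' + d * d') - (a * b' + b * d') * (c * a' + d * c'))"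
    unfolding det_mult_2x2 using g(2) h(2) by (rule nonzero_square_mult)
  ultimately show ?thesis unfolding psl2_iff by blast
qed

lemma psl2_inverse:
  assumes "g \<in> psl2"
  obtains h where "h \<in> psl2" "\<And>z. h (g z) = z" "\<And>z. g (h z) = z"
proof -
  obtain a b c d where g: "g = lft a b c d" "nonzero_square (a * d - b * c)"
    using assms psl2_iff by blast
  have det: "d * a - (- b) * (- c) = a * d - b * c" by (simp add: algebra_simps)
  have n: "a * d - b * c \<noteq> 0" "d * a - (- b) * (- c) \<noteq> 0"
    using nonzero_square_nonzero[OF g(2)] unfolding det by simp_all
  show thesis
  proof
    show "lft d (- b) (- c) a \<in> psl2" using g(2) det psl2_iff by metis
    show "lft d (- b) (- c) a (g z) = z" "g (lft d (- b) (- c) a z) = z" for z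
      unfolding g using lft_inverse[OF n(1)] lft_inverse[OF n(2)] by simp_all
  qed
qed

lemma inj_psl2:
  assumes "g \<in> psl2"
  shows "inj g"
proof (rule injI)
  obtain h where "h \<in> psl2" "\<And>z. h (g z) = z" "\<And>z. g (h z) = z"
    by (rule psl2_inverse[OF assms]) blast
  then show "x = y" if "g x = g y" for x y using that by metis
qed

lemma psl2_image_mem_orbit:
  assumes "g \<in> psl2" "X \<in> psl2_orbit S"
  shows "g ` X \<in> psl2_orbit S"
proof -
  obtain h where "h \<in> psl2" "X = h ` S" using assms(2) unfolding psl2_orbit_def by auto
  then have "g ` X = (g \<circ> h) ` S" "g \<circ> h \<in> psl2"
    using psl2_comp[OF assms(1)] by (auto simp: image_comp)
  then show ?thesis unfolding psl2_orbit_def by blast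
qed

definition lft_triple :: "'a::field \<Rightarrow> 'a \<Rightarrow> 'a \<Rightarrow> 'a \<Rightarrow> 'a option \<Rightarrow> 'a option" where
  "lft_triple r x y z = lft (r * (z - x)) (- (r * y * (z - x))) (z - y) (- (x * (z - y)))"

definition triple_det :: "'a::field \<Rightarrow> 'a \<Rightarrow> 'a \<Rightarrow> 'a \<Rightarrow> 'a" where
  "triple_det r x y z = r * (z - x) * (z - y) * (y - x)"

lemma lft_triple_matrix_det:
  "(r * (z - x)) * (- (x * (z - y))) - (- (r * y * (z - x))) * (z - y) = triple_det r x y z"
  unfolding triple_det_def by (simp add: algebra_simps)

lemma triple_det_nonzero:
  "r \<noteq> 0 \<Longrightarrow> x \<noteq> y \<Longrightarrow> x \<noteq> z \<Longrightarrow> y \<noteq> z \<Longrightarrow> triple_det r x y z \<noteq> 0"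
  unfolding triple_det_def by simp

lemma triple_det_scale: "triple_det r x y z = r * triple_det 1 x y z"
  unfolding triple_det_def by (simp add: algebra_simps)

lemma triple_det_mult: "triple_det r (t * x) (t * y) (t * z) = t ^ 3 * triple_det r x y z"
  unfolding triple_det_def by (simp add: algebra_simps power3_eq_cube)

lemma lft_triple_points:
  fixes r x y z :: "'a::field"
  assumes "r \<noteq> 0" "x \<noteq> y" "x \<noteq> z" "y \<noteq> z"
  shows "lft_triple r x y z (Some x) = None" "lft_triple r x y z (Some y) = Some 0"
    "lft_triple r x y z (Some z) = Some r"
proof -
  have "(z - y) * x + - (x * (z - y)) = 0"
    "(z - y) * y + - (x * (z - y)) = (z - y) * (y - x)"
    "r * (z - x) * y + - (r * y * (z - x)) = 0"
    "(z - y) * z + - (x * (z - y)) = (z - y) * (z - x)"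
    "r * (z - x) * z + - (r * y * (z - x)) = r * ((z - y) * (z - x))"
    by (simp_all add: algebra_simps)
  with assms show "lft_triple r x y z (Some x) = None" "lft_triple r x y z (Some y) = Some 0"
    "lft_triple r x y z (Some z) = Some r"
    unfolding lft_triple_def lft_Some by simp_all
qed

lemma lft_triple_in_psl2: "nonzero_square (triple_det r x y z) \<Longrightarrow> lft_triple r x y z \<in> psl2"
  unfolding psl2_iff lft_triple_def using lft_triple_matrix_det by metis

lemma lft_eq_lft_triple:
  fixes a b c d x y z r :: "'a::field"
  assumes det: "a * d - b * c \<noteq> 0" and r: "r \<noteq> 0" and "x \<noteq> y" "x \<noteq> z" "y \<noteq> z"
    and hx: "lft a b c d (Some x) = None" and hy: "lft a b c d (Some y) = Some 0"
    and hz: "lft a b c d (Some z) = Some r"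
  obtains \<mu> where "\<mu> \<noteq> 0" "lft a b c d = lft_triple r x y z"
    "a * d - b * c = \<mu> ^ 2 * triple_det r x y z"
proof -
  have d: "d = - (c * x)" using hx by (auto simp: eq_neg_iff_add_eq_0 add.commute split: if_splits)
  have b: "b = - (a * y)" using hy by (auto simp: eq_neg_iff_add_eq_0 add.commute split: if_splits)
  have "a * z + b = r * (c * z + d)" using hz by (auto simp: field_simps split: if_splits)
  then have "a * (z - y) = r * c * (z - x)" unfolding b d by (simp add: algebra_simps)
  define \<mu> where "\<mu> = c / (z - y)"
  have "z - y \<noteq> 0" using \<open>y \<noteq> z\<close> by simp
  then have c: "c = \<mu> * (z - y)" and a: "a = \<mu> * (r * (z - x))"
    using \<open>a * (z - y) = r * c * (z - x)\<close> unfolding \<mu>_def by (simp_all add: field_simps)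
  have b': "b = \<mu> * (- (r * y * (z - x)))" and d': "d = \<mu> * (- (x * (z - y)))"
    unfolding b d a c by (simp_all add: algebra_simps)
  have "\<mu> \<noteq> 0" using det c d' by auto
  moreover have "lft a b c d = lft_triple r x y z"
    unfolding lft_triple_def a b' c d' using \<open>\<mu> \<noteq> 0\<close> by (rule lft_scale)
  moreover have "a * d - b * c = \<mu> ^ 2 * triple_det r x y z"
    unfolding a b' c d' lft_triple_matrix_det[symmetric]
    by (simp add: algebra_simps power2_eq_square)
  ultimately show thesis by (rule that)
qed

lemma psl2_eq_lft_triple:
  fixes x y z r :: "'a::field"
  assumes "g \<in> psl2" "r \<noteq> 0" "x \<noteq> y" "x \<noteq> z" "y \<noteq> z"
    and "g (Some x) = None" "g (Some y) = Some 0" "g (Some z) = Some r"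
  shows "g = lft_triple r x y z" "nonzero_square (triple_det r x y z)"
proof -
  obtain a b c d where g: "g = lft a b c d" and sq: "nonzero_square (a * d - b * c)"
    using assms(1) psl2_iff by blast
  obtain \<mu> where "\<mu> \<noteq> 0" "lft a b c d = lft_triple r x y z"
    and det: "a * d - b * c = \<mu> ^ 2 * triple_det r x y z"
    using lft_eq_lft_triple[OF nonzero_square_nonzero[OF sq] assms(2-5)] assms(6-8) g by metis
  then show "g = lft_triple r x y z" using g by simp
  have "triple_det r x y z = (a * d - b * c) / \<mu> ^ 2" using det \<open>\<mu> \<noteq> 0\<close> by simp
  then show "nonzero_square (triple_det r x y z)"
    using nonzero_square_divide[OF sq nonzero_square_power2[OF \<open>\<mu> \<noteq> 0\<close>]] by simp
qed

section \<open>Finite fields of odd order\<close>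

lemma CHAR_eq_prime_if_card:
  assumes "prime p" "card (UNIV :: 'a::{field,finite} set) = p ^ n"
  shows "CHAR('a) = p"
proof -
  have "prime CHAR('a)"
    by (intro prime_CHAR_semidom finite_imp_CHAR_pos) simp
  moreover have "CHAR('a) dvd p ^ n" using CHAR_dvd_CARD[where 'a='a] assms(2) by simp
  ultimately show ?thesis using assms(1) prime_dvd_power primes_dvd_imp_eq by metis
qed

lemma two_neq_zero_if_odd_card:
  assumes "odd (card (UNIV :: 'a::{field,finite} set))"
  shows "(2::'a) \<noteq> 0"
proof
  assume "(2::'a) = 0"
  then have "CHAR('a) dvd 2" using of_nat_eq_0_iff_char_dvd[where 'a='a, of 2] by simp
  moreover have "odd CHAR('a)" using assms CHAR_dvd_CARD[where 'a='a] dvd_trans by blast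
  moreover have "CHAR('a) \<le> 2" using \<open>CHAR('a) dvd 2\<close> by (rule dvd_imp_le) simp
  moreover have "c \<le> 2 \<Longrightarrow> odd c \<Longrightarrow> c = Suc 0" for c :: nat by presburger
  ultimately show False using CHAR_not_1[where 'a='a] by blast
qed

lemma power_card_eq_1_if_mult_stable:
  fixes x :: "'a::field"
  assumes "finite S" "0 \<notin> S" "(\<lambda>y. x * y) ` S = S"
  shows "x ^ card S = 1"
proof (cases "S = {}")
  case False
  then have "x \<noteq> 0" using assms(2,3) by auto
  then have "inj_on (\<lambda>y. x * y) S" by (auto simp: inj_on_def)
  have "\<Prod>S = \<Prod>((\<lambda>y. x * y) ` S)" using assms(3) by simp
  also have "\<dots> = (\<Prod>y\<in>S. x * y)" using prod.reindex[OF \<open>inj_on _ S\<close>, of "\<lambda>y. y"] by simp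
  also have "\<dots> = x ^ card S * \<Prod>S" by (simp add: prod.distrib)
  finally have "\<Prod>S * x ^ card S = \<Prod>S * 1" by (simp add: mult.commute)
  moreover have "\<Prod>S \<noteq> 0" using assms(1,2) by (metis prod_zero_iff)
  ultimately show ?thesis by simp
qed simp

lemma card_UNIV_minus_zero: "card (UNIV - {0::'a::{field,finite}}) = CARD('a) - 1"
  by (simp add: card_Diff_singleton)

lemma power_card_minus_1_eq_1:
  fixes x :: "'a::{field,finite}"
  assumes "x \<noteq> 0"
  shows "x ^ (CARD('a) - 1) = 1"
proof -
  have "(\<lambda>y. x * y) ` (UNIV - {0}) = UNIV - {0}"
  proof (intro equalityI subsetI)
    fix y :: 'a assume "y \<in> UNIV - {0}"
    then have "y = x * (y / x)" "y / x \<in> UNIV - {0}" using assms by auto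
    then show "y \<in> (\<lambda>y. x * y) ` (UNIV - {0})" by (rule image_eqI)
  qed (use assms in auto)
  from power_card_eq_1_if_mult_stable[OF _ _ this] show ?thesis
    by (simp add: card_UNIV_minus_zero)
qed

lemma card_power_eq_le:
  fixes a :: "'a::field"
  assumes "0 < m"
  shows "finite {x. x ^ m = a}" "card {x. x ^ m = a} \<le> m"
proof -
  define P where "P = Polynomial.monom (1::'a) m + [:- a:]"
  have "degree P = m"
    using assms unfolding P_def by (subst degree_add_eq_left) (auto simp: degree_monom_eq)
  then have "P \<noteq> 0" using assms by auto
  have roots: "{x. x ^ m = a} = {x. poly P x = 0}" by (simp add: P_def poly_monom)
  show "finite {x. x ^ m = a}" unfolding roots using \<open>P \<noteq> 0\<close> by (rule poly_roots_finite)
  show "card {x. x ^ m = a} \<le> m"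
    unfolding roots using card_poly_roots_bound[OF \<open>P \<noteq> 0\<close>] \<open>degree P = m\<close> by simp
qed

lemma CARD_minus_1_le_twice_card_squares:
  "CARD('a::{field,finite}) - 1 \<le> 2 * card {y::'a. nonzero_square y}"
proof -
  let ?Sq = "{y::'a. nonzero_square y}"
  have "UNIV - {0} \<subseteq> (\<Union>y\<in>?Sq. {s. s ^ 2 = y})"
    unfolding nonzero_square_def by auto
  then have "card (UNIV - {0::'a}) \<le> card (\<Union>y\<in>?Sq. {s. s ^ 2 = y})"
    by (intro card_mono) auto
  also have "\<dots> \<le> (\<Sum>y\<in>?Sq. card {s. s ^ 2 = y})" by (rule card_UN_le) simp
  also have "\<dots> \<le> (\<Sum>y\<in>?Sq. 2)" by (intro sum_mono card_power_eq_le) simp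
  finally show ?thesis by (simp add: card_UNIV_minus_zero)
qed

lemma nonzero_square_iff_power:
  fixes x :: "'a::{field,finite}"
  assumes "odd CARD('a)"
  shows "nonzero_square x \<longleftrightarrow> x \<noteq> 0 \<and> x ^ ((CARD('a) - 1) div 2) = 1"
proof -
  define h where "h = (CARD('a) - 1) div 2"
  have q: "CARD('a) - 1 = 2 * h" using assms unfolding h_def by simp
  have "card {0::'a, 1} \<le> CARD('a)" by (rule card_mono) auto
  then have "0 < h" using q by simp
  let ?Sq = "{y::'a. nonzero_square y}" and ?R = "{y::'a. y ^ h = 1}"
  have "?Sq \<subseteq> ?R"
  proof
    fix y assume "y \<in> ?Sq"
    then obtain s where "s \<noteq> 0" "y = s ^ 2" unfolding nonzero_square_def by auto
    then show "y \<in> ?R" using power_card_minus_1_eq_1[of s] q by (simp add: power_mult)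
  qed
  moreover have "card ?R \<le> card ?Sq"
    using card_power_eq_le[OF \<open>0 < h\<close>, of "1::'a"] CARD_minus_1_le_twice_card_squares[where 'a='a]
      q by linarith
  ultimately have "?Sq = ?R" using card_seteq card_power_eq_le(1)[OF \<open>0 < h\<close>] by blast
  then show ?thesis unfolding h_def using nonzero_square_nonzero by blast
qed

lemma nonsquare_iff_power:
  fixes x :: "'a::{field,finite}"
  assumes "odd CARD('a)" "x \<noteq> 0"
  shows "\<not> nonzero_square x \<longleftrightarrow> x ^ ((CARD('a) - 1) div 2) = - 1"
proof -
  let ?c = "x ^ ((CARD('a) - 1) div 2)"
  have "?c ^ 2 = 1"
    using power_card_minus_1_eq_1[OF assms(2)] assms(1) by (simp flip: power_mult)
  then have "?c = 1 \<or> ?c = - 1" by (simp add: power2_eq_1_iff)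
  moreover have "(1::'a) \<noteq> - 1" using two_neq_zero_if_odd_card[OF assms(1)]
    by (metis one_add_one add_eq_0_iff2)
  ultimately show ?thesis using nonzero_square_iff_power[OF assms(1), of x] assms(2) by auto
qed

lemma nonsquare_mult_nonsquare:
  fixes x y :: "'a::{field,finite}"
  assumes "odd CARD('a)" "x \<noteq> 0" "y \<noteq> 0" "\<not> nonzero_square x" "\<not> nonzero_square y"
  shows "nonzero_square (x * y)"
proof -
  let ?h = "(CARD('a) - 1) div 2"
  have "x ^ ?h = - 1" "y ^ ?h = - 1" using nonsquare_iff_power[OF assms(1)] assms(2-5) by blast+
  then have "(x * y) ^ ?h = 1" by (simp add: power_mult_distrib)
  then show ?thesis using nonzero_square_iff_power[OF assms(1)] assms(2,3) by simp
qed

lemma ex_nonsquare: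
  assumes "odd CARD('a)"
  obtains v :: "'a::{field,finite}" where "v \<noteq> 0" "\<not> nonzero_square v"
proof -
  define h where "h = (CARD('a) - 1) div 2"
  have q: "CARD('a) - 1 = 2 * h" using assms unfolding h_def by simp
  have "card {0::'a, 1} \<le> CARD('a)" by (rule card_mono) auto
  then have "0 < h" using q by simp
  have "\<not> UNIV - {0::'a} \<subseteq> {y. y ^ h = 1}"
  proof
    assume "UNIV - {0::'a} \<subseteq> {y. y ^ h = 1}"
    then have "card (UNIV - {0::'a}) \<le> card {y::'a. y ^ h = 1}"
      by (intro card_mono card_power_eq_le(1)[OF \<open>0 < h\<close>])
    also have "\<dots> \<le> h" by (rule card_power_eq_le(2)[OF \<open>0 < h\<close>])
    finally have "card (UNIV - {0::'a}) \<le> h" .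
    then show False using q \<open>0 < h\<close> by (simp add: card_UNIV_minus_zero)
  qed
  then show thesis using that nonzero_square_iff_power[OF assms] unfolding h_def by blast
qed

lemma nonzero_square_minus_1:
  assumes "CARD('a::{field,finite}) mod 4 = 1"
  shows "nonzero_square (- 1 :: 'a)"
proof -
  have "odd CARD('a)" "even ((CARD('a) - 1) div 2)" using assms by presburger+
  then show ?thesis using nonzero_square_iff_power[of "- 1 :: 'a"] by simp
qed

lemma card_power_eq_1_half:
  fixes B :: "'a::field set"
  assumes "finite B" "card B = 2 * h" "0 < h" "(1::'a) \<noteq> - 1"
    and "\<And>t. t \<in> B \<Longrightarrow> t ^ h = 1 \<or> t ^ h = - 1"
  shows "card {t \<in> B. t ^ h = 1} = h" "card {t \<in> B. t ^ h = - 1} = h"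
proof -
  have le: "card {t \<in> B. t ^ h = c} \<le> h" for c :: 'a
  proof -
    have "card {t \<in> B. t ^ h = c} \<le> card {x. x ^ h = c}"
      by (intro card_mono card_power_eq_le(1)[OF assms(3)]) auto
    also have "\<dots> \<le> h" by (rule card_power_eq_le(2)[OF assms(3)])
    finally show ?thesis .
  qed
  have "card ({t \<in> B. t ^ h = 1} \<union> {t \<in> B. t ^ h = - 1}) =
      card {t \<in> B. t ^ h = 1} + card {t \<in> B. t ^ h = - 1}"
    by (rule card_Un_disjoint) (use assms(1,4) in auto)
  moreover have "{t \<in> B. t ^ h = 1} \<union> {t \<in> B. t ^ h = - 1} = B" using assms(5) by auto
  ultimately have "card {t \<in> B. t ^ h = 1} + card {t \<in> B. t ^ h = - 1} = 2 * h"
    using assms(2) by simp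
  then show "card {t \<in> B. t ^ h = 1} = h" "card {t \<in> B. t ^ h = - 1} = h"
    using le[of 1] le[of "- 1"] by linarith+
qed

section \<open>Blocks through three points\<close>

definition distinct_triples :: "'a set \<Rightarrow> ('a \<times> 'a \<times> 'a) set" where
  "distinct_triples B = {(x, y, z). x \<in> B \<and> y \<in> B \<and> z \<in> B \<and> x \<noteq> y \<and> x \<noteq> z \<and> y \<noteq> z}"

lemma card_distinct_triples:
  assumes "finite B"
  shows "card (distinct_triples B) = card B * (card B - 1) * (card B - 2)"
proof -
  have eq: "distinct_triples B = Sigma B (\<lambda>x. Sigma (B - {x}) (\<lambda>y. B - {x, y}))"
    unfolding distinct_triples_def by auto
  have "card (B - {x, y}) = card B - 2" if "x \<in> B" "y \<in> B - {x}" for x y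
    using that assms by (subst card_Diff_subset) auto
  then have "card (distinct_triples B) = (\<Sum>x\<in>B. \<Sum>y\<in>B - {x}. card B - 2)"
    unfolding eq using assms by (simp add: card_SigmaI)
  also have "\<dots> = card B * ((card B - 1) * (card B - 2))"
    using assms by (simp add: card_Diff_singleton)
  finally show ?thesis by (simp add: mult.assoc)
qed

lemma finite_distinct_triples: "finite B \<Longrightarrow> finite (distinct_triples B)"
  unfolding distinct_triples_def by (rule finite_subset[of _ "B \<times> B \<times> B"]) auto

lemma card_eq_card_image_mult_if_uniform_fibres:
  assumes "finite A" "\<And>a. a \<in> A \<Longrightarrow> card {a' \<in> A. f a' = f a} = m"
  shows "card A = card (f ` A) * m"
proof -
  have "card A = card (\<Union>y\<in>f ` A. {a \<in> A. f a = y})" by (rule arg_cong[where f = card]) auto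
  also have "\<dots> = (\<Sum>y\<in>f ` A. card {a \<in> A. f a = y})"
    by (rule card_UN_disjoint) (use assms(1) in auto)
  also have "\<dots> = (\<Sum>y\<in>f ` A. m)" using assms(2) by (intro sum.cong) auto
  finally show ?thesis by simp
qed

definition admissible_triples :: "'a::field set \<Rightarrow> 'a \<Rightarrow> ('a \<times> 'a \<times> 'a) set" where
  "admissible_triples B r = {(x, y, z) \<in> distinct_triples B. nonzero_square (triple_det r x y z)}"

definition triple_block :: "'a::field set \<Rightarrow> 'a \<Rightarrow> 'a \<times> 'a \<times> 'a \<Rightarrow> 'a option set" where
  "triple_block B r = (\<lambda>(x, y, z). lft_triple r x y z ` Some ` B)"

definition blocks_through :: "'a::field set \<Rightarrow> 'a option set \<Rightarrow> 'a option set set" where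
  "blocks_through B T = {X \<in> psl2_orbit (Some ` B). T \<subseteq> X}"

lemma blocks_through_standard_triple:
  fixes B :: "'a::field set"
  assumes "r \<noteq> 0"
  shows "blocks_through B {None, Some 0, Some r} = triple_block B r ` admissible_triples B r"
proof (intro equalityI subsetI)
  fix X assume "X \<in> blocks_through B {None, Some 0, Some r}"
  then obtain g where g: "g \<in> psl2" "X = g ` Some ` B" and T: "{None, Some 0, Some r} \<subseteq> X"
    unfolding blocks_through_def psl2_orbit_def by auto
  from T obtain x y z where "x \<in> B" "y \<in> B" "z \<in> B"
    and gx: "g (Some x) = None" and gy: "g (Some y) = Some 0" and gz: "g (Some z) = Some r"
    unfolding g(2) by auto
  with assms have "x \<noteq> y" "x \<noteq> z" "y \<noteq> z" by auto
  note std = psl2_eq_lft_triple[OF g(1) assms this gx gy gz]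
  then have "(x, y, z) \<in> admissible_triples B r"
    using \<open>x \<in> B\<close> \<open>y \<in> B\<close> \<open>z \<in> B\<close> \<open>x \<noteq> y\<close> \<open>x \<noteq> z\<close> \<open>y \<noteq> z\<close>
    unfolding admissible_triples_def distinct_triples_def by auto
  moreover have "X = triple_block B r (x, y, z)" unfolding g(2) std(1) triple_block_def by simp
  ultimately show "X \<in> triple_block B r ` admissible_triples B r" by blast
next
  fix X assume "X \<in> triple_block B r ` admissible_triples B r"
  then obtain x y z where "x \<in> B" "y \<in> B" "z \<in> B" "x \<noteq> y" "x \<noteq> z" "y \<noteq> z"
    and sq: "nonzero_square (triple_det r x y z)" and X: "X = lft_triple r x y z ` Some ` B"
    unfolding admissible_triples_def distinct_triples_def triple_block_def by auto
  note pts = lft_triple_points[OF assms \<open>x \<noteq> y\<close> \<open>x \<noteq> z\<close> \<open>y \<noteq> z\<close>]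
  have "X \<in> psl2_orbit (Some ` B)"
    unfolding X psl2_orbit_def using lft_triple_in_psl2[OF sq] by blast
  moreover have "None \<in> X" "Some 0 \<in> X" "Some r \<in> X"
    unfolding X using pts \<open>x \<in> B\<close> \<open>y \<in> B\<close> \<open>z \<in> B\<close> by (metis image_eqI)+
  ultimately show "X \<in> blocks_through B {None, Some 0, Some r}"
    unfolding blocks_through_def by simp
qed

lemma card_blocks_through_psl2_image:
  fixes B :: "'a::field set"
  assumes g: "g \<in> psl2"
  shows "card (blocks_through B (g ` T)) = card (blocks_through B T)"
proof -
  obtain h where h: "h \<in> psl2" "\<And>z. h (g z) = z" "\<And>z. g (h z) = z"
    by (rule psl2_inverse[OF g]) blast
  have "blocks_through B (g ` T) = (\<lambda>X. g ` X) ` blocks_through B T"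
  proof (intro equalityI subsetI)
    fix Y assume Y: "Y \<in> blocks_through B (g ` T)"
    then have "T \<subseteq> h ` Y" "h ` Y \<in> psl2_orbit (Some ` B)"
      using psl2_image_mem_orbit[OF h(1)] unfolding blocks_through_def
      by (auto simp: h(2) rev_image_eqI)
    moreover have "Y = g ` h ` Y" by (simp add: image_image h(3))
    ultimately show "Y \<in> (\<lambda>X. g ` X) ` blocks_through B T" unfolding blocks_through_def by blast
  next
    fix Y assume "Y \<in> (\<lambda>X. g ` X) ` blocks_through B T"
    then show "Y \<in> blocks_through B (g ` T)"
      using psl2_image_mem_orbit[OF g] unfolding blocks_through_def by auto
  qed
  moreover have "inj_on (\<lambda>X. g ` X) (blocks_through B T)"
    using inj_psl2[OF g] by (auto simp: inj_on_def inj_image_eq_iff)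
  ultimately show ?thesis by (simp add: card_image)
qed

lemma card_block:
  assumes "X \<in> psl2_orbit (Some ` B)"
  shows "card X = card B"
proof -
  obtain g where g: "g \<in> psl2" "X = g ` Some ` B" using assms unfolding psl2_orbit_def by auto
  have "card (g ` Some ` B) = card (Some ` B)"
    using inj_psl2[OF g(1)] by (auto intro: card_image inj_on_subset)
  then show ?thesis by (simp add: g(2) card_image)
qed

lemma gives_3_design_iff:
  fixes B :: "'a::{field,finite} set"
  assumes "card B = k"
  shows "gives_3_design B k lam \<longleftrightarrow>
    0 < lam \<and> (\<forall>T. card T = 3 \<longrightarrow> card (blocks_through B T) = lam)"
  using card_block[of _ B] assms
  unfolding gives_3_design_def is_3_design_def blocks_through_def by auto

lemma not_gives_3_design_if_card_less_3:
  fixes B :: "'a::{field,finite} set"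
  assumes "card B < 3"
  shows "\<not> gives_3_design B (card B) lam"
proof
  let ?T = "{None, Some 0, Some (1::'a)}"
  assume "gives_3_design B (card B) lam"
  then have "0 < lam" "card (blocks_through B ?T) = lam"
    unfolding gives_3_design_iff[OF refl] by auto
  moreover have "blocks_through B ?T = {}"
  proof -
    have "card ?T \<le> card X" if "X \<in> psl2_orbit (Some ` B)" "?T \<subseteq> X" for X
      using that card_block[OF that(1)] by (intro card_mono) (auto intro: finite_subset)
    then show ?thesis using assms card_block unfolding blocks_through_def by fastforce
  qed
  ultimately show False by simp
qed

lemma psl2_normalise_3set:
  fixes T :: "'a::{field,finite} option set"
  assumes "odd CARD('a)" "v \<noteq> 0" "\<not> nonzero_square v" "card T = 3"
  obtains g r where "g \<in> psl2" "r = 1 \<or> r = v" "g ` T = {None, Some 0, Some r}"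
proof -
  have choose: "\<exists>r. (r = 1 \<or> r = v) \<and> nonzero_square (r * D)" if "D \<noteq> 0" for D :: 'a
    using nonsquare_mult_nonsquare[OF assms(1,2) that assms(3)] by (cases "nonzero_square D") auto
  obtain P Q R where T: "T = {P, Q, R}" "P \<noteq> Q" "Q \<noteq> R" "P \<noteq> R"
    using assms(4) card_3_iff by metis
  show thesis
  proof (cases "None \<in> T")
    case True
    then obtain u w where uw: "T = {None, Some u, Some w}" "u \<noteq> w"
      using T by (cases P; cases Q; cases R) (auto simp: insert_commute)
    obtain r where r: "r = 1 \<or> r = v" "nonzero_square (r * (w - u))"
      using choose[of "w - u"] uw(2) by auto
    then have "r \<noteq> 0" using assms(2) by auto
    have "(r * w - r * u) / (w - u) = r" using uw(2) by (simp flip: right_diff_distrib)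
    then have "lft r (- (r * u)) 0 (w - u) ` T = {None, Some 0, Some r}"
      using uw \<open>r \<noteq> 0\<close> by simp
    moreover have "lft r (- (r * u)) 0 (w - u) \<in> psl2"
      using r(2) unfolding psl2_iff by (metis diff_zero mult_zero_right)
    ultimately show thesis using that r(1) by blast
  next
    case False
    then obtain x y z where xyz: "T = {Some x, Some y, Some z}" "x \<noteq> y" "x \<noteq> z" "y \<noteq> z"
      using T by (cases P; cases Q; cases R) auto
    obtain r where r: "r = 1 \<or> r = v" "nonzero_square (r * triple_det 1 x y z)"
      using choose triple_det_nonzero[OF one_neq_zero xyz(2-4)] by blast
    then have "r \<noteq> 0" using assms(2) by auto
    have "lft_triple r x y z ` T = {None, Some 0, Some r}"
      using lft_triple_points[OF \<open>r \<noteq> 0\<close> xyz(2-4)] xyz(1) by simp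
    moreover have "lft_triple r x y z \<in> psl2"
      using r(2) triple_det_scale[of r] lft_triple_in_psl2 by metis
    ultimately show thesis using that r(1) by blast
  qed
qed

section \<open>The stabiliser of the starter\<close>

lemma linear_powers_coeff_eq_if_eq_on_roots_of_unity:
  fixes a b c d :: "'a::field"
  assumes "finite W" "card W = k" "\<And>w. w \<in> W \<Longrightarrow> w ^ k = 1"
    and "\<And>w. w \<in> W \<Longrightarrow> (a * w + b) ^ k = (c * w + d) ^ k" and "0 < j" "j < k"
  shows "of_nat (k choose j) * a ^ j * b ^ (k - j) = of_nat (k choose j) * c ^ j * d ^ (k - j)"
proof -
  \<comment> \<open>The multiple of \<open>X\<^sup>k - 1\<close> vanishes on \<open>W\<close> and makes the leading coefficients agree.\<close>
  define u :: "'a poly" where "u = Polynomial.monom 1 k - 1"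
  define p where "p = [:b, a:] ^ k + Polynomial.smult (c ^ k - a ^ k) u"
  define q where "q = [:d, c:] ^ k"
  have coeff_u: "Polynomial.coeff u i = (if i = k then 1 else if i = 0 then - 1 else 0)" for i
    using assms(5,6) by (auto simp: u_def coeff_monom)
  have deg_linear: "degree ([:y, x:] ^ k) \<le> k" for x y :: 'a
    by (rule order.trans[OF degree_power_le]) (cases "x = 0"; simp)
  have "p = q"
  proof (rule poly_eqI_degree_lead_coeff[of p k q W])
    show "Polynomial.coeff p k = Polynomial.coeff q k"
      by (simp add: p_def q_def coeff_u coeff_linear_poly_power)
    show "degree p \<le> k" unfolding p_def u_def
      by (intro degree_add_le deg_linear order.trans[OF degree_smult_le] degree_diff_le)
        (simp_all add: degree_monom_le)
    show "degree q \<le> k" unfolding q_def by (rule deg_linear)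
    show "poly p w = poly q w" if "w \<in> W" for w
      using assms(3,4)[OF that] by (simp add: p_def q_def u_def poly_monom algebra_simps)
  qed (use assms(2) in simp)
  then have "Polynomial.coeff p j = Polynomial.coeff q j" by simp
  then show ?thesis using assms(5,6) by (simp add: p_def q_def coeff_u coeff_linear_poly_power)
qed

lemma diagonal_or_antidiagonal_if_power_eqs:
  fixes a b c d :: "'a::field"
  assumes E1: "a * b ^ (m + 1) = c * d ^ (m + 1)" and E2: "a ^ 2 * b ^ m = c ^ 2 * d ^ m"
    and det: "a * d - b * c \<noteq> 0"
  shows "(b = 0 \<and> c = 0) \<or> (a = 0 \<and> d = 0)"
proof (rule ccontr)
  assume "\<not> ?thesis"
  with det E1 have "b \<noteq> 0" "d \<noteq> 0" by auto
  with det E1 have "c \<noteq> 0" by auto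
  have "(a * d) * (c * d ^ (m + 1)) = (a * b ^ (m + 1)) * (a * d)"
    unfolding E1 by (rule mult.commute)
  also have "\<dots> = (a ^ 2 * b ^ m) * (b * d)" by (simp add: power2_eq_square algebra_simps)
  also have "\<dots> = (b * c) * (c * d ^ (m + 1))"
    unfolding E2 by (simp add: power2_eq_square algebra_simps)
  finally have "a * d = b * c" using \<open>c \<noteq> 0\<close> \<open>d \<noteq> 0\<close> by simp
  with det show False by simp
qed

definition stab_map :: "'a::field \<times> bool \<Rightarrow> 'a \<Rightarrow> 'a" where
  "stab_map \<pi> w = (if snd \<pi> then fst \<pi> / w else fst \<pi> * w)"

definition stab_params :: "'a::field set \<Rightarrow> ('a \<times> bool) set" where
  "stab_params B = {t \<in> B. nonzero_square t} \<times> UNIV"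

definition stab_act :: "'a::field \<times> bool \<Rightarrow> 'a \<times> 'a \<times> 'a \<Rightarrow> 'a \<times> 'a \<times> 'a" where
  "stab_act \<pi> = (\<lambda>(x, y, z). (stab_map \<pi> x, stab_map \<pi> y, stab_map \<pi> z))"

locale psl2_starter =
  fixes B :: "'a::{field,finite} set" and k :: nat
  assumes card_mod_4: "CARD('a) mod 4 = 1"
    and k_less_CHAR: "k < CHAR('a)" and three_le_k: "3 \<le> k"
    and zero_notin: "0 \<notin> B" and one_mem: "1 \<in> B"
    and mult_mem: "\<And>x y. x \<in> B \<Longrightarrow> y \<in> B \<Longrightarrow> x * y \<in> B"
    and inverse_mem: "\<And>x. x \<in> B \<Longrightarrow> inverse x \<in> B"
    and card_B: "card B = k"
begin

lemma odd_card: "odd CARD('a)"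
  using card_mod_4 by presburger

lemma minus_1_square: "nonzero_square (- 1 :: 'a)"
  using card_mod_4 by (rule nonzero_square_minus_1)

lemma finite_B: "finite B"
  by simp

lemma nonzero_if_mem: "x \<in> B \<Longrightarrow> x \<noteq> 0"
  using zero_notin by auto

lemma power_k_eq_1: "t \<in> B \<Longrightarrow> t ^ k = 1"
proof -
  assume t: "t \<in> B"
  have "(\<lambda>y. t * y) ` B = B"
  proof (intro equalityI subsetI)
    fix y assume "y \<in> B"
    then have "y = t * (inverse t * y)" "inverse t * y \<in> B"
      using t nonzero_if_mem mult_mem inverse_mem by auto
    then show "y \<in> (\<lambda>y. t * y) ` B" by (rule image_eqI)
  qed (use t mult_mem in auto)
  then show ?thesis using power_card_eq_1_if_mult_stable[of B t] zero_notin card_B by simp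
qed

lemma of_nat_neq_0: "0 < m \<Longrightarrow> m \<le> k \<Longrightarrow> of_nat m \<noteq> (0::'a)"
  using k_less_CHAR by (auto simp: of_nat_eq_0_iff_char_dvd dest: dvd_imp_le)

lemma lft_preserving_B_diagonal_or_antidiagonal:
  fixes a b c d :: 'a
  assumes det: "a * d - b * c \<noteq> 0"
    and maps: "\<And>w. w \<in> B \<Longrightarrow> lft a b c d (Some w) \<in> Some ` B"
  shows "(b = 0 \<and> c = 0) \<or> (a = 0 \<and> d = 0)"
proof -
  have pow: "(a * w + b) ^ k = (c * w + d) ^ k" if "w \<in> B" for w
  proof -
    from maps[OF that] obtain v where "v \<in> B" "lft a b c d (Some w) = Some v" by auto
    then have "c * w + d \<noteq> 0" "v = (a * w + b) / (c * w + d)" by (auto split: if_splits)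
    with power_k_eq_1[OF \<open>v \<in> B\<close>] show ?thesis by (simp add: power_divide)
  qed
  note coeff_eq =
    linear_powers_coeff_eq_if_eq_on_roots_of_unity[OF finite_B card_B power_k_eq_1 pow]
  define m where "m = k - 2"
  have k: "k = m + 2" using three_le_k unfolding m_def by simp
  have "even (k * (k - 1))" using three_le_k by (cases "even k") auto
  then have "2 * (k choose 2) = k * (k - 1)" by (simp add: choose_two)
  then have "of_nat 2 * of_nat (k choose 2) = (of_nat k * of_nat (k - 1) :: 'a)"
    by (metis of_nat_mult)
  then have "of_nat (k choose 2) \<noteq> (0::'a)"
    using of_nat_neq_0[of k] of_nat_neq_0[of "k - 1"] three_le_k by auto
  with coeff_eq[of 2] three_le_k have E2: "a ^ 2 * b ^ m = c ^ 2 * d ^ m" by (simp add: k)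
  from coeff_eq[of 1] of_nat_neq_0[of k] three_le_k have E1: "a * b ^ (m + 1) = c * d ^ (m + 1)"
    by (simp add: k)
  from E1 E2 det show ?thesis by (rule diagonal_or_antidiagonal_if_power_eqs)
qed

lemma stab_map_mem: "\<pi> \<in> stab_params B \<Longrightarrow> w \<in> B \<Longrightarrow> stab_map \<pi> w \<in> B"
  unfolding stab_params_def stab_map_def using mult_mem inverse_mem by (auto simp: divide_inverse)

lemma inj_on_stab_map: "\<pi> \<in> stab_params B \<Longrightarrow> inj_on (stab_map \<pi>) B"
  using nonzero_if_mem unfolding stab_params_def stab_map_def inj_on_def by (auto simp: field_simps)

lemma stab_map_image: "\<pi> \<in> stab_params B \<Longrightarrow> stab_map \<pi> ` B = B"
  using endo_inj_surj[OF finite_B] stab_map_mem inj_on_stab_map by blast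

lemma stab_map_in_psl2:
  assumes "\<pi> \<in> stab_params B"
  obtains g where "g \<in> psl2" "\<And>w. w \<in> B \<Longrightarrow> g (Some w) = Some (stab_map \<pi> w)"
proof -
  obtain t \<beta> where \<pi>: "\<pi> = (t, \<beta>)" "t \<in> B" "nonzero_square t"
    using assms unfolding stab_params_def by auto
  show thesis
  proof (cases \<beta>)
    case True
    have "nonzero_square (0 * 0 - t * 1)"
      using nonzero_square_mult[OF minus_1_square \<pi>(3)] by simp
    show thesis
    proof (rule that)
      show "lft 0 t 1 0 \<in> psl2" using \<open>nonzero_square (0 * 0 - t * 1)\<close> psl2_iff by blast
      show "lft 0 t 1 0 (Some w) = Some (stab_map \<pi> w)" if "w \<in> B" for w
        using nonzero_if_mem[OF that] by (simp add: \<pi>(1) True stab_map_def)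
    qed
  next
    case False
    have "nonzero_square (t * 1 - 0 * 0)" using \<pi>(3) by simp
    show thesis
    proof (rule that)
      show "lft t 0 0 1 \<in> psl2" using \<open>nonzero_square (t * 1 - 0 * 0)\<close> psl2_iff by blast
      show "lft t 0 0 1 (Some w) = Some (stab_map \<pi> w)" for w
        by (simp add: \<pi>(1) False stab_map_def)
    qed
  qed
qed

lemma psl2_stabiliser:
  assumes "g \<in> psl2" and maps: "\<And>w. w \<in> B \<Longrightarrow> g (Some w) \<in> Some ` B"
  obtains \<pi> where "\<pi> \<in> stab_params B" "\<And>w. w \<in> B \<Longrightarrow> g (Some w) = Some (stab_map \<pi> w)"
proof -
  obtain a b c d where g: "g = lft a b c d" and sq: "nonzero_square (a * d - b * c)"
    using assms(1) psl2_iff by blast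
  have det: "a * d - b * c \<noteq> 0" using nonzero_square_nonzero[OF sq] .
  obtain t where t: "g (Some 1) = Some t" "t \<in> B" using maps[OF one_mem] by auto
  consider "b = 0" "c = 0" | "a = 0" "d = 0"
    using lft_preserving_B_diagonal_or_antidiagonal[OF det] maps unfolding g by blast
  then show thesis
  proof cases
    case 1
    then have "a \<noteq> 0" "d \<noteq> 0" and t_eq: "t = a / d" using det t(1) unfolding g by auto
    have "t = (a * d - b * c) / d ^ 2" unfolding t_eq 1 by (simp add: power2_eq_square)
    then have "nonzero_square t"
      using nonzero_square_divide[OF sq nonzero_square_power2[OF \<open>d \<noteq> 0\<close>]] by simp
    show thesis
    proof (rule that)
      show "(t, False) \<in> stab_params B" using t(2) \<open>nonzero_square t\<close> by (simp add: stab_params_def)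
      show "g (Some w) = Some (stab_map (t, False) w)" for w
        using \<open>d \<noteq> 0\<close> by (simp add: g 1 t_eq stab_map_def)
    qed
  next
    case 2
    then have "b \<noteq> 0" "c \<noteq> 0" and t_eq: "t = b / c" using det t(1) unfolding g by auto
    have "t = (- 1) * (a * d - b * c) / c ^ 2" unfolding t_eq 2 by (simp add: power2_eq_square)
    then have "nonzero_square t"
      using nonzero_square_divide[OF nonzero_square_mult[OF minus_1_square sq]
          nonzero_square_power2[OF \<open>c \<noteq> 0\<close>]] by simp
    show thesis
    proof (rule that)
      show "(t, True) \<in> stab_params B" using t(2) \<open>nonzero_square t\<close> by (simp add: stab_params_def)
      show "g (Some w) = Some (stab_map (t, True) w)" if "w \<in> B" for w
        using \<open>c \<noteq> 0\<close> nonzero_if_mem[OF that] by (simp add: g 2 t_eq stab_map_def)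
    qed
  qed
qed

lemma inj_on_stab_act:
  assumes "\<tau> \<in> distinct_triples B"
  shows "inj_on (\<lambda>\<pi>. stab_act \<pi> \<tau>) (stab_params B)"
proof
  fix \<pi> \<pi>' assume "\<pi> \<in> stab_params B" "\<pi>' \<in> stab_params B"
    and eq: "stab_act \<pi> \<tau> = stab_act \<pi>' \<tau>"
  obtain t \<beta> t' \<beta>' where \<pi>: "\<pi> = (t, \<beta>)" "\<pi>' = (t', \<beta>')" "t \<noteq> 0" "t' \<noteq> 0"
    using \<open>\<pi> \<in> _\<close> \<open>\<pi>' \<in> _\<close> nonzero_if_mem unfolding stab_params_def by auto
  obtain x y z where \<tau>: "\<tau> = (x, y, z)" "x \<noteq> 0" "y \<noteq> 0" "z \<noteq> 0" "x \<noteq> y" "x \<noteq> z" "y \<noteq> z"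
    using assms nonzero_if_mem unfolding distinct_triples_def by auto
  have no_mixed: False
    if "s * x = s' / x" "s * y = s' / y" "s * z = s' / z" "s \<noteq> 0" for s s' :: 'a
  proof -
    from that \<tau> have "s * x ^ 2 = s * y ^ 2" "s * x ^ 2 = s * z ^ 2"
      by (auto simp: field_simps power2_eq_square)
    then have "y = - x" "z = - x" using \<open>s \<noteq> 0\<close> \<tau> by (auto simp: power2_eq_iff)
    with \<tau> show False by simp
  qed
  from eq have "stab_map \<pi> x = stab_map \<pi>' x" "stab_map \<pi> y = stab_map \<pi>' y"
    "stab_map \<pi> z = stab_map \<pi>' z"
    unfolding \<tau>(1) stab_act_def by auto
  then show "\<pi> = \<pi>'"
  proof (cases \<beta>; cases \<beta>')
    assume "\<beta>" "\<not> \<beta>'"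
    with \<open>stab_map \<pi> x = _\<close> \<open>stab_map \<pi> y = _\<close> \<open>stab_map \<pi> z = _\<close> no_mixed[of t' t] \<pi>(4)
    show ?thesis by (simp add: \<pi> stab_map_def)
  next
    assume "\<not> \<beta>" "\<beta>'"
    with \<open>stab_map \<pi> x = _\<close> \<open>stab_map \<pi> y = _\<close> \<open>stab_map \<pi> z = _\<close> no_mixed[of t t'] \<pi>(3)
    show ?thesis by (simp add: \<pi> stab_map_def)
  qed (use \<tau> in \<open>auto simp: \<pi> stab_map_def\<close>)
qed

lemma stab_act_admissible:
  assumes r: "r \<noteq> 0" and \<tau>: "\<tau> \<in> admissible_triples B r" and \<pi>: "\<pi> \<in> stab_params B"
  shows "stab_act \<pi> \<tau> \<in> admissible_triples B r"
    and "triple_block B r (stab_act \<pi> \<tau>) = triple_block B r \<tau>"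
proof -
  obtain x y z where \<tau>_eq: "\<tau> = (x, y, z)" and xyz: "x \<in> B" "y \<in> B" "z \<in> B"
    and dist: "x \<noteq> y" "x \<noteq> z" "y \<noteq> z" and sq: "nonzero_square (triple_det r x y z)"
    using \<tau> unfolding admissible_triples_def distinct_triples_def by auto
  obtain s where s: "s \<in> psl2" "\<And>w. w \<in> B \<Longrightarrow> s (Some w) = Some (stab_map \<pi> w)"
    by (rule stab_map_in_psl2[OF \<pi>]) blast
  obtain h where h: "h \<in> psl2" "\<And>z. h (s z) = z" "\<And>z. s (h z) = z"
    by (rule psl2_inverse[OF s(1)]) blast
  define g where "g = lft_triple r x y z \<circ> h"
  have g: "g \<in> psl2" unfolding g_def using psl2_comp lft_triple_in_psl2[OF sq] h(1) by blast
  have g_stab: "g (Some (stab_map \<pi> w)) = lft_triple r x y z (Some w)" if "w \<in> B" for w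
    unfolding g_def using h(2)[of "Some w"] s(2)[OF that] by simp
  let ?x = "stab_map \<pi> x" and ?y = "stab_map \<pi> y" and ?z = "stab_map \<pi> z"
  have xyz': "?x \<in> B" "?y \<in> B" "?z \<in> B" using stab_map_mem[OF \<pi>] xyz by auto
  have dist': "?x \<noteq> ?y" "?x \<noteq> ?z" "?y \<noteq> ?z"
    using inj_on_eq_iff[OF inj_on_stab_map[OF \<pi>]] xyz dist by auto
  \<comment> \<open>\<open>g\<close> sends the moved triple to \<open>\<infinity>, 0, r\<close>, so it is the normalising map of that triple.\<close>
  note std = psl2_eq_lft_triple[OF g r dist',
      unfolded g_stab[OF xyz(1)] g_stab[OF xyz(2)] g_stab[OF xyz(3)],
      OF lft_triple_points[OF r dist]]
  show "stab_act \<pi> \<tau> \<in> admissible_triples B r"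
    using std(2) xyz' dist' unfolding \<tau>_eq stab_act_def admissible_triples_def distinct_triples_def
    by simp
  have "triple_block B r (stab_act \<pi> \<tau>) = g ` Some ` B"
    unfolding \<tau>_eq stab_act_def triple_block_def std(1) by simp
  also have "\<dots> = g ` Some ` stab_map \<pi> ` B" by (simp only: stab_map_image[OF \<pi>])
  also have "\<dots> = triple_block B r \<tau>"
    unfolding \<tau>_eq triple_block_def image_image using g_stab by (auto simp: image_iff)
  finally show "triple_block B r (stab_act \<pi> \<tau>) = triple_block B r \<tau>" .
qed

lemma same_triple_block_imp_stab_act:
  assumes r: "r \<noteq> 0" and \<tau>: "\<tau> \<in> admissible_triples B r" and \<tau>': "\<tau>' \<in> admissible_triples B r"
    and same: "triple_block B r \<tau>' = triple_block B r \<tau>"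
  obtains \<pi> where "\<pi> \<in> stab_params B" "\<tau>' = stab_act \<pi> \<tau>"
proof -
  obtain x y z where \<tau>_eq: "\<tau> = (x, y, z)" and xyz: "x \<in> B" "y \<in> B" "z \<in> B"
    and dist: "x \<noteq> y" "x \<noteq> z" "y \<noteq> z" and sq: "nonzero_square (triple_det r x y z)"
    using \<tau> unfolding admissible_triples_def distinct_triples_def by auto
  obtain x' y' z' where \<tau>'_eq: "\<tau>' = (x', y', z')" and xyz': "x' \<in> B" "y' \<in> B" "z' \<in> B"
    and dist': "x' \<noteq> y'" "x' \<noteq> z'" "y' \<noteq> z'" and sq': "nonzero_square (triple_det r x' y' z')"
    using \<tau>' unfolding admissible_triples_def distinct_triples_def by auto
  let ?f = "lft_triple r x y z" and ?f' = "lft_triple r x' y' z'"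
  obtain h where h: "h \<in> psl2" "\<And>z. h (?f' z) = z" "\<And>z. ?f' (h z) = z"
    by (rule psl2_inverse[OF lft_triple_in_psl2[OF sq']]) blast
  have g: "h \<circ> ?f \<in> psl2" using psl2_comp[OF h(1) lft_triple_in_psl2[OF sq]] .
  have "(h \<circ> ?f) (Some w) \<in> Some ` B" if "w \<in> B" for w
  proof -
    have "?f (Some w) \<in> ?f' ` Some ` B"
      using same that unfolding \<tau>_eq \<tau>'_eq triple_block_def by blast
    then show ?thesis using h(2) by auto
  qed
  then obtain \<pi> where \<pi>: "\<pi> \<in> stab_params B"
    "\<And>w. w \<in> B \<Longrightarrow> h (?f (Some w)) = Some (stab_map \<pi> w)"
    using psl2_stabiliser[OF g] by (metis comp_apply)
  note pts = lft_triple_points[OF r dist] lft_triple_points[OF r dist']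
  have "stab_map \<pi> w = w'" if "w \<in> B" "?f (Some w) = ?f' (Some w')" for w w'
    using \<pi>(2)[OF that(1)] h(2)[of "Some w'"] that(2) by simp
  then have "stab_map \<pi> x = x'" "stab_map \<pi> y = y'" "stab_map \<pi> z = z'"
    using xyz pts by simp_all
  then show thesis using that[OF \<pi>(1)] unfolding \<tau>_eq \<tau>'_eq stab_act_def by simp
qed

lemma card_admissible_triples:
  assumes r: "r \<noteq> 0"
  shows "card (admissible_triples B r) =
    card (blocks_through B {None, Some 0, Some r}) * card (stab_params B)"
proof -
  have "card {\<tau>' \<in> admissible_triples B r. triple_block B r \<tau>' = triple_block B r \<tau>} =
      card (stab_params B)" if \<tau>: "\<tau> \<in> admissible_triples B r" for \<tau>
  proof -
    have "{\<tau>' \<in> admissible_triples B r. triple_block B r \<tau>' = triple_block B r \<tau>} =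
        (\<lambda>\<pi>. stab_act \<pi> \<tau>) ` stab_params B"
    proof (intro equalityI subsetI)
      fix \<tau>' assume "\<tau>' \<in> {\<tau>' \<in> admissible_triples B r. triple_block B r \<tau>' = triple_block B r \<tau>}"
      then have "\<tau>' \<in> admissible_triples B r" "triple_block B r \<tau>' = triple_block B r \<tau>" by simp_all
      then obtain \<pi> where "\<pi> \<in> stab_params B" "\<tau>' = stab_act \<pi> \<tau>"
        by (rule same_triple_block_imp_stab_act[OF r \<tau>]) blast
      then show "\<tau>' \<in> (\<lambda>\<pi>. stab_act \<pi> \<tau>) ` stab_params B" by blast
    qed (use stab_act_admissible[OF r \<tau>] in auto)
    moreover have "\<tau> \<in> distinct_triples B" using \<tau> unfolding admissible_triples_def by auto
    ultimately show ?thesis using card_image[OF inj_on_stab_act] by simp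
  qed
  then show ?thesis unfolding blocks_through_standard_triple[OF r]
    by (intro card_eq_card_image_mult_if_uniform_fibres) simp_all
qed

lemma card_stab_params: "card (stab_params B) = 2 * card {t \<in> B. nonzero_square t}"
  unfolding stab_params_def by (simp add: card_cartesian_product)

lemma nonzero_square_if_even_index:
  assumes "k dvd CARD('a) - 1" "even ((CARD('a) - 1) div k)" "t \<in> B"
  shows "nonzero_square t"
proof -
  obtain e where e: "(CARD('a) - 1) div k = 2 * e" using assms(2) by (rule evenE)
  then have e: "CARD('a) - 1 = k * (2 * e)" using assms(1) by (metis dvd_mult_div_cancel)
  have "t ^ ((CARD('a) - 1) div 2) = (t ^ k) ^ e" unfolding e by (simp add: power_mult)
  then show ?thesis
    using nonzero_square_iff_power[OF odd_card] power_k_eq_1[OF assms(3)]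
      nonzero_if_mem[OF assms(3)] by simp
qed

lemma squares_in_B_if_odd_index:
  assumes "k dvd CARD('a) - 1" "odd ((CARD('a) - 1) div k)"
  shows "2 * card {t \<in> B. nonzero_square t} = k" "\<exists>t\<in>B. \<not> nonzero_square t"
proof -
  define e where "e = (CARD('a) - 1) div k"
  have e: "CARD('a) - 1 = k * e" "odd e" using assms unfolding e_def by simp_all
  have "even (CARD('a) - 1)" using odd_card by simp
  then have "even (k * e)" by (simp only: e(1))
  then obtain h where k: "k = 2 * h" using e(2) by (auto elim: evenE)
  have "0 < h" using three_le_k k by simp
  have pm: "t ^ h = 1 \<or> t ^ h = - 1" if "t \<in> B" for t
  proof -
    have "(t ^ h) ^ 2 = t ^ k" by (simp add: k mult.commute flip: power_mult)
    then show ?thesis using power_k_eq_1[OF that] by (simp add: power2_eq_1_iff)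
  qed
  have "(1::'a) \<noteq> - 1"
    using two_neq_zero_if_odd_card[OF odd_card] by (metis one_add_one add_eq_0_iff2)
  have sq: "nonzero_square t \<longleftrightarrow> t ^ h = 1" if "t \<in> B" for t
  proof -
    have "t ^ ((CARD('a) - 1) div 2) = (t ^ h) ^ e" unfolding e(1) k by (simp add: power_mult)
    also have "\<dots> = t ^ h" using pm[OF that] e(2) by auto
    finally show ?thesis using nonzero_square_iff_power[OF odd_card] nonzero_if_mem[OF that] by simp
  qed
  note halves = card_power_eq_1_half[OF finite_B card_B[unfolded k] \<open>0 < h\<close> \<open>1 \<noteq> - 1\<close> pm]
  have "{t \<in> B. nonzero_square t} = {t \<in> B. t ^ h = 1}" using sq by auto
  then show "2 * card {t \<in> B. nonzero_square t} = k" using halves(1) k by simp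
  have "{t \<in> B. t ^ h = - 1} \<noteq> {}" using halves(2) \<open>0 < h\<close> by (metis card.empty less_irrefl)
  then obtain t0 where "t0 \<in> B" "t0 ^ h = - 1" by blast
  then show "\<exists>t\<in>B. \<not> nonzero_square t" using sq[of t0] \<open>(1::'a) \<noteq> - 1\<close> by metis
qed

lemma admissible_triples_partition:
  assumes v: "v \<noteq> 0" "\<not> nonzero_square v"
  shows "admissible_triples B 1 \<inter> admissible_triples B v = {}"
    and "admissible_triples B 1 \<union> admissible_triples B v = distinct_triples B"
proof -
  have "nonzero_square (triple_det v x y z) \<longleftrightarrow> \<not> nonzero_square (triple_det 1 x y z)"
    if "x \<noteq> y" "x \<noteq> z" "y \<noteq> z" for x y z
  proof -
    let ?D = "triple_det 1 x y z"
    have "?D \<noteq> 0" using triple_det_nonzero[OF one_neq_zero that] .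
    have "\<not> nonzero_square (v * ?D)" if "nonzero_square ?D"
      using nonzero_square_divide[of "v * ?D" ?D] that v \<open>?D \<noteq> 0\<close> by auto
    moreover have "nonzero_square (v * ?D)" if "\<not> nonzero_square ?D"
      using nonsquare_mult_nonsquare[OF odd_card v(1) \<open>?D \<noteq> 0\<close> v(2) that] .
    ultimately show ?thesis using triple_det_scale[of v] by metis
  qed
  then show "admissible_triples B 1 \<inter> admissible_triples B v = {}"
    and "admissible_triples B 1 \<union> admissible_triples B v = distinct_triples B"
    unfolding admissible_triples_def distinct_triples_def by auto
qed

lemma card_admissible_triples_sum:
  assumes "v \<noteq> 0" "\<not> nonzero_square v"
  shows "card (admissible_triples B 1) + card (admissible_triples B v) = k * (k - 1) * (k - 2)"
  using card_Un_disjoint[of "admissible_triples B 1" "admissible_triples B v"]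
    admissible_triples_partition[OF assms] finite_distinct_triples[OF finite_B]
    card_distinct_triples[OF finite_B] card_B
  by (metis finite_Un)

lemma card_admissible_triples_eq:
  assumes v: "v \<noteq> 0" "\<not> nonzero_square v" and t0: "t0 \<in> B" "\<not> nonzero_square t0"
  shows "card (admissible_triples B 1) = card (admissible_triples B v)"
proof -
  let ?m = "stab_act (t0, False)"
  have "t0 \<noteq> 0" using nonzero_if_mem[OF t0(1)] .
  have sq: "nonzero_square (v * t0)"
    using nonsquare_mult_nonsquare[OF odd_card v(1) \<open>t0 \<noteq> 0\<close> v(2) t0(2)] .
  have maps: "?m ` admissible_triples B r \<subseteq> admissible_triples B r'"
    if "r \<noteq> 0" "nonzero_square (r * r' * t0)" for r r'
  proof
    fix \<tau>' assume "\<tau>' \<in> ?m ` admissible_triples B r"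
    then obtain x y z where "x \<in> B" "y \<in> B" "z \<in> B" "x \<noteq> y" "x \<noteq> z" "y \<noteq> z"
      and D: "nonzero_square (triple_det r x y z)" and \<tau>': "\<tau>' = (t0 * x, t0 * y, t0 * z)"
      unfolding admissible_triples_def distinct_triples_def stab_act_def stab_map_def by auto
    have "triple_det r' (t0 * x) (t0 * y) (t0 * z) =
        (r * r' * t0) * (t0 / r) ^ 2 * triple_det r x y z"
      using \<open>r \<noteq> 0\<close> triple_det_scale[of r] triple_det_scale[of r'] triple_det_mult[of r']
      by (simp add: field_simps power2_eq_square power3_eq_cube)
    then have "nonzero_square (triple_det r' (t0 * x) (t0 * y) (t0 * z))"
      using nonzero_square_mult[OF nonzero_square_mult[OF that(2) nonzero_square_power2] D]
        \<open>r \<noteq> 0\<close> \<open>t0 \<noteq> 0\<close> by simp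
    with \<tau>' \<open>t0 \<noteq> 0\<close> t0(1) mult_mem \<open>x \<in> B\<close> \<open>y \<in> B\<close> \<open>z \<in> B\<close> \<open>x \<noteq> y\<close> \<open>x \<noteq> z\<close> \<open>y \<noteq> z\<close>
    show "\<tau>' \<in> admissible_triples B r'"
      unfolding admissible_triples_def distinct_triples_def by simp
  qed
  have inj: "inj_on ?m A" for A
    using \<open>t0 \<noteq> 0\<close> unfolding stab_act_def stab_map_def inj_on_def by auto
  have finite: "finite (admissible_triples B r)" for r
    using finite_distinct_triples[OF finite_B] unfolding admissible_triples_def by simp
  show ?thesis
    using card_inj_on_le[OF inj maps[of 1 v] finite] card_inj_on_le[OF inj maps[of v 1] finite]
      sq v(1) by simp
qed

lemma four_lambda_if_even_index:
  assumes "k dvd CARD('a) - 1" "even ((CARD('a) - 1) div k)" "gives_3_design B k lam"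
  shows "4 * lam = (k - 1) * (k - 2)"
proof -
  obtain v :: 'a where v: "v \<noteq> 0" "\<not> nonzero_square v" using ex_nonsquare[OF odd_card] by blast
  have "{t \<in> B. nonzero_square t} = B" using nonzero_square_if_even_index[OF assms(1,2)] by auto
  then have params: "card (stab_params B) = 2 * k" by (simp add: card_stab_params card_B)
  have "card (admissible_triples B r) = lam * (2 * k)" if "r = 1 \<or> r = v" for r
  proof -
    have "r \<noteq> 0" "card {None, Some 0, Some r} = 3" using that v(1) by auto
    then show ?thesis using card_admissible_triples assms(3) params
      unfolding gives_3_design_iff[OF card_B] by auto
  qed
  then have "k * (4 * lam) = card (admissible_triples B 1) + card (admissible_triples B v)" by simp
  also have "\<dots> = k * ((k - 1) * (k - 2))"
    unfolding card_admissible_triples_sum[OF v] by (simp only: mult.assoc)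
  finally show ?thesis using three_le_k by simp
qed

lemma design_if_odd_index:
  assumes "k dvd CARD('a) - 1" "odd ((CARD('a) - 1) div k)"
  shows "gives_3_design B k ((k - 1) * (k - 2) div 2)"
proof -
  obtain v :: 'a where v: "v \<noteq> 0" "\<not> nonzero_square v" using ex_nonsquare[OF odd_card] by blast
  obtain t0 where t0: "t0 \<in> B" "\<not> nonzero_square t0"
    using squares_in_B_if_odd_index(2)[OF assms] by blast
  have params: "card (stab_params B) = k"
    using squares_in_B_if_odd_index(1)[OF assms] by (simp add: card_stab_params)
  have standard: "2 * card (blocks_through B {None, Some 0, Some r}) = (k - 1) * (k - 2)"
    if "r = 1 \<or> r = v" for r
  proof -
    have "2 * card (admissible_triples B r) = k * (k - 1) * (k - 2)"
      using card_admissible_triples_sum[OF v] card_admissible_triples_eq[OF v t0] that by auto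
    moreover have "k * (2 * card (blocks_through B {None, Some 0, Some r})) =
        2 * card (admissible_triples B r)"
      using card_admissible_triples[of r] params that v(1) by auto
    ultimately have
      "k * (2 * card (blocks_through B {None, Some 0, Some r})) = k * ((k - 1) * (k - 2))"
      by (simp only: mult.assoc)
    then show ?thesis using three_le_k by simp
  qed
  show ?thesis
    unfolding gives_3_design_iff[OF card_B]
  proof (intro conjI allI impI)
    have "2 * 1 \<le> (k - 1) * (k - 2)" using three_le_k by (intro mult_le_mono) auto
    then show "0 < (k - 1) * (k - 2) div 2" by simp
    fix T :: "'a option set" assume "card T = 3"
    then obtain g r where "g \<in> psl2" "r = 1 \<or> r = v" "g ` T = {None, Some 0, Some r}"
      using psl2_normalise_3set[OF odd_card v] by metis
    then show "card (blocks_through B T) = (k - 1) * (k - 2) div 2"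
      using card_blocks_through_psl2_image standard
      by (metis nonzero_mult_div_cancel_left zero_neq_numeral)
  qed
qed

end

theorem theorem2p5:
  fixes B :: "'a::{field,finite} set"
    and p n q k e :: nat
  assumes "prime p" and "odd p"
    and "q = p ^ n" and "card (UNIV :: 'a set) = q"
    and "q mod 4 = 1"
    and "k dvd q - 1" and "k < p"
    and "e = (q - 1) div k"
    and "B \<subseteq> {x. x \<noteq> 0}" and "1 \<in> B"
    and "\<forall>x\<in>B. \<forall>y\<in>B. x * y \<in> B" and "\<forall>x\<in>B. inverse x \<in> B"
    and "card B = k"
  shows "(odd e \<longrightarrow> gives_3_design B k ((k - 1) * (k - 2) div 2) \<and> 2 * ((k - 1) * (k - 2) div 2) = (k - 1) * (k - 2))
       \<and> (\<forall>lam::nat. even e \<longrightarrow> gives_3_design B k lam \<longrightarrow> 4 * lam = (k - 1) * (k - 2))"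
proof -
  have q: "CARD('a) = q" and e: "e = (CARD('a) - 1) div k" and dvd: "k dvd CARD('a) - 1"
    using assms(4,6,8) by simp_all
  have "0 < k" using assms(10,13) card_gt_0_iff by force
  show ?thesis
  proof (cases "k < 3")
    case True
    have "4 dvd q - 1" using assms(5) by presburger
    moreover have "k = 1 \<or> k = 2" using True \<open>0 < k\<close> by auto
    ultimately have "even e" unfolding assms(8) by (elim disjE dvdE) simp_all
    then show ?thesis using not_gives_3_design_if_card_less_3[of B] True assms(13) by auto
  next
    case False
    interpret psl2_starter B k
      using assms False CHAR_eq_prime_if_card[OF assms(1), where 'a='a] q
      by unfold_locales auto
    have "even ((k - 1) * (k - 2))" using False by (cases "even k") auto
    then show ?thesis using four_lambda_if_even_index[OF dvd] design_if_odd_index[OF dvd] e by auto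
  qed
qed

end
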